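(* Let $n\geq1$, $\eta\in\Omega$, $l\in\{1,\ldots,n\}$ and $(r_1,\ldots,r_l)\in\mathbb N^l$. For $1\leq i\leq l$ let $T_{i,\eta}+r_i=\{v+(r_i,r_i):v\in T_{i,\eta}\}$. Then $$\mathrm{span}_{\mathbb C}\{\bar v: v\in T_{0,\eta}\cup\textstyle\bigcup_{i=1}^l(T_{i,\eta}+r_i)\}=\mathrm{span}_{\mathbb C}\{\bar v:v\in\bigcup_{i=0}^lT_{i,\eta}\}.$$ In particular, $\overline{v_{l,\eta}+(r,r)}\in\mathrm{span}_{\mathbb C}\{\bar v:v\in\bigcup_{i=0}^lT_{i,\eta}\}$ for all $r\in\mathbb N$.
   Context: $n\geq1$ is fixed. $\Lambda_{2,n}=\{\alpha\in\mathbb N^2:1\leq\alpha_1+\alpha_2\leq n\}$, $\lambda_{2,n}=|\Lambda_{2,n}|$; for $v\in\mathbb N^2$, $\bar v=\big(\binom{v_1}{\alpha_1}\binom{v_2}{\alpha_2}\big)_{\alpha\in\Lambda_{2,n}}\in\mathbb C^{\lambda_{2,n}}$. $\Omega$ is the set of sequences $\eta=(z,d_0,d_1,\ldots,d_r)$ with $z\in\{0,1\}$, $d_0=0$, $d_i\geq1$ for $1\leq i\leq r$, $\sum_{i=0}^rd_i=n$. For $j\in\{1,\ldots,n\}$ let $t\in\{1,\ldots,r\}$ be unique with $\sum_{i=0}^{t-1}d_i<j\leq\sum_{i=0}^td_i$, $c=j-\sum_{i=0}^{t-1}d_i$; $v_{j,\eta}=(\sum_{i\text{ odd},i<t}d_i+c,0)$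 if $z=1,t$ odd; $(0,\sum_{i\text{ even},i<t}d_i+c)$ if $z=1,t$ even; $(0,\sum_{i\text{ odd},i<t}d_i+c)$ if $z=0,t$ odd; $(\sum_{i\text{ even},i<t}d_i+c,0)$ if $z=0,t$ even. $T_{j,\eta}=\{v_{j,\eta}+p(1,1):0\leq p\leq n-j\}$ for $1\leq j\leq n$, and $T_{0,\eta}=\{(p,p):1\leq p\leq n\}$. *)

theory Defs
  imports Complex_Main "HOL-Library.Function_Algebras"
begin

definition Lambda2 :: "nat \<Rightarrow> (nat \<times> nat) set" where
  "Lambda2 n = {(a1, a2). 1 \<le> a1 + a2 \<and> a1 + a2 \<le> n}"

text \<open>The vector bar v in C^{lambda_{2,n}}, represented as a function on the index
  set Lambda_{2,n} (extended by 0 outside of it).\<close>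
definition barv :: "nat \<Rightarrow> nat \<times> nat \<Rightarrow> (nat \<times> nat \<Rightarrow> complex)" where
  "barv n v = (\<lambda>\<alpha>. if \<alpha> \<in> Lambda2 n
      then of_nat ((fst v choose fst \<alpha>) * (snd v choose snd \<alpha>)) else 0)"

definition cspan :: "(nat \<times> nat \<Rightarrow> complex) set \<Rightarrow> (nat \<times> nat \<Rightarrow> complex) set" where
  "cspan = module.span (\<lambda>(c::complex) f x. c * f x)"

text \<open>eta = (z, d_0, d_1, ..., d_r) is represented as a pair (z, ds) with
  ds = [d_0, d_1, ..., d_r], so r = length ds - 1.\<close>
definition Omega :: "nat \<Rightarrow> (nat \<times> nat list) set" where
  "Omega n = {(z, ds). z \<in> {0, 1} \<and> ds \<noteq> [] \<and> ds ! 0 = 0 \<and>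
      (\<forall>i \<in> {1..<length ds}. 1 \<le> ds ! i) \<and> sum_list ds = n}"

definition psum :: "nat list \<Rightarrow> nat \<Rightarrow> nat" where
  "psum ds t = (\<Sum>i\<in>{0..t}. ds ! i)"

definition vvec :: "nat \<Rightarrow> nat \<times> nat list \<Rightarrow> nat \<times> nat" where
  "vvec j \<eta> = (let z = fst \<eta>; ds = snd \<eta>; r = length ds - 1;
      t = (THE t. 1 \<le> t \<and> t \<le> r \<and> psum ds (t - 1) < j \<and> j \<le> psum ds t);
      c = j - psum ds (t - 1);
      so = (\<Sum>i\<in>{i. i < t \<and> odd i}. ds ! i) + c;
      se = (\<Sum>i\<in>{i. i < t \<and> even i}. ds ! i) + c
    in if z = 1 then (if odd t then (so, 0) else (0, se))
       else (if odd t then (0, so) else (se, 0)))"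

definition Tset :: "nat \<Rightarrow> nat \<times> nat list \<Rightarrow> nat \<Rightarrow> (nat \<times> nat) set" where
  "Tset n \<eta> j = (if j = 0 then {(p, p) | p. 1 \<le> p \<and> p \<le> n}
      else {(fst (vvec j \<eta>) + p, snd (vvec j \<eta>) + p) | p. p \<le> n - j})"

definition shift :: "nat \<Rightarrow> nat \<times> nat \<Rightarrow> nat \<times> nat" where
  "shift r v = (fst v + r, snd v + r)"

end

theory Submission
  imports Defs
begin

(* Let a_j and b_j be the numbers of points v_{i,eta}, 1 <= i <= j, on the x-axis and on the
  y-axis.  Then v_{j+1,eta} is (a_j + 1, 0) or (0, b_j + 1) and a_j + b_j = j, so T_0, ..., T_l
  lie in the strip -b_l <= x - y <= a_l, one on each of its diagonals.
  Each coordinate of g(x, y) = bar (x, y) is C(x, a1) C(y, a2) with a1 + a2 <= n, so g is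
  annihilated by n - j diagonal, b_j vertical and a_j + 1 horizontal forward differences.  At
  (t, t), the b_j-th y-difference of the (a_j + 1)-th x-difference of g equals g(a_j + 1 + t, t)
  up to sign and to values of g on the strip of step j; along the diagonal its (n - j)-th
  difference vanishes.  Hence an additive subgroup containing g on that strip and on n - j
  consecutive points of the next diagonal contains g on the whole diagonal (for (0, b_j + 1)
  swap x and y).  The main diagonal is the case of n + 1 consecutive points, g(0, 0) = 0 and
  g(p, p) for (p, p) in T_0.  By induction on j, any set of points of the strip containing T_0
  and n - i + 1 consecutive points of the diagonal of each T_i spans the same space as g on the
  whole strip, and both sides of the statement are spans of such sets. *)

section \<open>Additive subgroups and forward differences\<close>

locale additive_subgroup =
  fixes W :: "'a::ab_group_add set"
  assumes zero_mem: "0 \<in> W"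
    and diff_mem: "u \<in> W \<Longrightarrow> v \<in> W \<Longrightarrow> u - v \<in> W"
begin

lemma add_mem: "u \<in> W \<Longrightarrow> v \<in> W \<Longrightarrow> u + v \<in> W"
  using diff_mem[of u "0 - v"] diff_mem[OF zero_mem, of v] by simp

lemma diff_mem_iff_left: "v \<in> W \<Longrightarrow> u - v \<in> W \<longleftrightarrow> u \<in> W"
  using add_mem[of "u - v" v] diff_mem[of u v] by auto

lemma diff_mem_iff_right: "u \<in> W \<Longrightarrow> u - v \<in> W \<longleftrightarrow> v \<in> W"
  using diff_mem[of u "u - v"] diff_mem[of u v] by auto

end

definition fdiff :: "(nat \<Rightarrow> 'a::ab_group_add) \<Rightarrow> nat \<Rightarrow> 'a" where
  "fdiff h t = h (Suc t) - h t"

definition diff_x :: "(nat \<Rightarrow> nat \<Rightarrow> 'a::ab_group_add) \<Rightarrow> nat \<Rightarrow> nat \<Rightarrow> 'a" where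
  "diff_x f x y = f (Suc x) y - f x y"

definition diff_y :: "(nat \<Rightarrow> nat \<Rightarrow> 'a::ab_group_add) \<Rightarrow> nat \<Rightarrow> nat \<Rightarrow> 'a" where
  "diff_y f x y = f x (Suc y) - f x y"

definition diff_diag :: "(nat \<Rightarrow> nat \<Rightarrow> 'a::ab_group_add) \<Rightarrow> nat \<Rightarrow> nat \<Rightarrow> 'a" where
  "diff_diag f x y = f (Suc x) (Suc y) - f x y"

lemma fdiff_pow_diagonal: "(fdiff ^^ m) (\<lambda>t. f t t) t = (diff_diag ^^ m) f t t"
  by (induction m arbitrary: t) (simp_all add: fdiff_def diff_diag_def)

context additive_subgroup
begin

lemma mem_iff_mem_if_fdiff_mem:
  assumes "\<And>t. fdiff h t \<in> W"
  shows "h s \<in> W \<longleftrightarrow> h t \<in> W"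
proof -
  have "h t \<in> W \<longleftrightarrow> h 0 \<in> W" for t
  proof (induction t)
    case (Suc t)
    have "h (Suc t) - h t \<in> W" using assms[of t] by (simp add: fdiff_def)
    then have "h (Suc t) \<in> W \<longleftrightarrow> h t \<in> W"
      using diff_mem_iff_left[of "h t" "h (Suc t)"] diff_mem_iff_right[of "h (Suc t)" "h t"] by blast
    with Suc.IH show ?case by simp
  qed simp
  then show ?thesis by blast
qed

lemma mem_if_fdiff_pow_mem:
  assumes "\<And>t. (fdiff ^^ m) h t \<in> W" and "\<And>t. R \<le> t \<Longrightarrow> t < R + m \<Longrightarrow> h t \<in> W"
  shows "h t \<in> W"
  using assms
proof (induction m arbitrary: h t)
  case (Suc m)
  have "fdiff h t \<in> W" for t
  proof (rule Suc.IH)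
    show "(fdiff ^^ m) (fdiff h) t \<in> W" for t
      using Suc.prems(1) by (simp add: funpow_Suc_right del: funpow.simps)
    show "fdiff h t \<in> W" if "R \<le> t" "t < R + m" for t
      using Suc.prems(2) that diff_mem by (simp add: fdiff_def)
  qed
  moreover have "h R \<in> W" using Suc.prems(2) by simp
  ultimately show ?case using mem_iff_mem_if_fdiff_mem[of h R t] by simp
qed simp

lemma corner_mem_iff_diff_y_pow:
  assumes "\<And>x y. y \<le> x + b \<Longrightarrow> x < y \<Longrightarrow> g x y \<in> W"
  shows "g t t \<in> W \<longleftrightarrow> (diff_y ^^ b) g t t \<in> W"
  using assms
proof (induction b arbitrary: g)
  case (Suc b)
  have "diff_y g t t \<in> W \<longleftrightarrow> (diff_y ^^ b) (diff_y g) t t \<in> W"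
    using Suc.prems by (intro Suc.IH) (simp add: diff_y_def diff_mem)
  moreover have "g t t \<in> W \<longleftrightarrow> diff_y g t t \<in> W"
  proof -
    have "g t (Suc t) \<in> W" using Suc.prems by simp
    then show ?thesis using diff_mem_iff_right[of "g t (Suc t)" "g t t"] by (simp add: diff_y_def)
  qed
  ultimately show ?case
    by (simp add: funpow_Suc_right del: funpow.simps)
qed simp

lemma corner_mem_iff_diff_pow:
  assumes "\<And>x y. y \<le> x + b \<Longrightarrow> x < y + a \<Longrightarrow> g x y \<in> W"
  shows "g (a + t) t \<in> W \<longleftrightarrow> (diff_y ^^ b) ((diff_x ^^ a) g) t t \<in> W"
  using assms
proof (induction a arbitrary: g)
  case 0
  then show ?case using corner_mem_iff_diff_y_pow by simp
next
  case (Suc a)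
  have "diff_x g (a + t) t \<in> W \<longleftrightarrow> (diff_y ^^ b) ((diff_x ^^ a) (diff_x g)) t t \<in> W"
    using Suc.prems by (intro Suc.IH) (simp add: diff_x_def diff_mem)
  moreover have "g (Suc a + t) t \<in> W \<longleftrightarrow> diff_x g (a + t) t \<in> W"
  proof -
    have "g (a + t) t \<in> W" using Suc.prems by simp
    then show ?thesis using diff_mem_iff_left[of "g (a + t) t" "g (Suc a + t) t"] by (simp add: diff_x_def)
  qed
  ultimately show ?case
    by (simp add: funpow_Suc_right del: funpow.simps)
qed

lemma strip_extend:
  assumes vanish: "(diff_diag ^^ m) ((diff_y ^^ b) ((diff_x ^^ Suc a) g)) = 0"
    and strip: "\<And>x y. y \<le> x + b \<Longrightarrow> x \<le> y + a \<Longrightarrow> g x y \<in> W"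
    and window: "\<And>t. R \<le> t \<Longrightarrow> t < R + m \<Longrightarrow> g (Suc a + t) t \<in> W"
    and "y \<le> x + b" "x \<le> y + Suc a"
  shows "g x y \<in> W"
proof (cases "x \<le> y + a")
  case True
  then show ?thesis using strip \<open>y \<le> x + b\<close> by blast
next
  case False
  let ?h = "\<lambda>t. (diff_y ^^ b) ((diff_x ^^ Suc a) g) t t"
  have corner: "g (Suc a + t) t \<in> W \<longleftrightarrow> ?h t \<in> W" for t
    using strip by (intro corner_mem_iff_diff_pow) simp
  have "?h y \<in> W"
  proof (rule mem_if_fdiff_pow_mem)
    show "(fdiff ^^ m) ?h t \<in> W" for t
      using vanish zero_mem by (simp add: fdiff_pow_diagonal)
    show "?h t \<in> W" if "R \<le> t" "t < R + m" for t
      using window[OF that] corner by blast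
  qed
  moreover have "x = Suc a + y" using False \<open>x \<le> y + Suc a\<close> by simp
  ultimately show ?thesis using corner by simp
qed

end

lemma diff_x_zero [simp]: "diff_x 0 = 0"
  and diff_y_zero [simp]: "diff_y 0 = 0"
  and diff_diag_zero [simp]: "diff_diag 0 = 0"
  by (simp_all add: fun_eq_iff diff_x_def diff_y_def diff_diag_def)

lemma diff_pow_zero [simp]:
  "(diff_x ^^ k) 0 = 0" "(diff_y ^^ k) 0 = 0" "(diff_diag ^^ k) 0 = 0"
  by (induction k) simp_all

lemma diff_diag_pow_add:
  "(diff_diag ^^ m) (f + g) = (diff_diag ^^ m) f + (diff_diag ^^ m) g"
  by (induction m) (simp_all add: fun_eq_iff diff_diag_def)

lemma diff_pow_apply:
  fixes f :: "nat \<Rightarrow> nat \<Rightarrow> 'a \<Rightarrow> 'b::ab_group_add"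
  shows "(diff_x ^^ k) f x y \<beta> = (diff_x ^^ k) (\<lambda>x y. f x y \<beta>) x y"
    and "(diff_y ^^ k) f x y \<beta> = (diff_y ^^ k) (\<lambda>x y. f x y \<beta>) x y"
    and "(diff_diag ^^ k) f x y \<beta> = (diff_diag ^^ k) (\<lambda>x y. f x y \<beta>) x y"
  by (induction k arbitrary: x y) (simp_all add: diff_x_def diff_y_def diff_diag_def)

section \<open>Products of binomial coefficients\<close>

definition binom2 :: "nat \<Rightarrow> nat \<Rightarrow> nat \<Rightarrow> nat \<Rightarrow> 'a::ring_1" where
  "binom2 i j x y = of_nat (x choose i) * of_nat (y choose j)"

lemma diff_x_binom2: "diff_x (binom2 (Suc i) j) = binom2 i j" "diff_x (binom2 0 j) = 0"
  by (simp_all add: fun_eq_iff diff_x_def binom2_def algebra_simps)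

lemma diff_y_binom2: "diff_y (binom2 i (Suc j)) = binom2 i j" "diff_y (binom2 i 0) = 0"
  by (simp_all add: fun_eq_iff diff_y_def binom2_def algebra_simps)

lemma diff_diag_binom2:
  "diff_diag (binom2 (Suc i) (Suc j)) = binom2 i j + binom2 i (Suc j) + binom2 (Suc i) j"
  "diff_diag (binom2 (Suc i) 0) = binom2 i 0"
  "diff_diag (binom2 0 (Suc j)) = binom2 0 j"
  "diff_diag (binom2 0 0) = 0"
  by (simp_all add: fun_eq_iff diff_diag_def binom2_def algebra_simps)

lemma diff_x_pow_binom2: "(diff_x ^^ a) (binom2 i j) = (if a \<le> i then binom2 (i - a) j else 0)"
proof (induction a)
  case (Suc a)
  then show ?case
    by (cases "a < i") (auto simp: diff_x_binom2 Suc_diff_Suc[symmetric] not_less_eq_eq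
        zero_fun_def[symmetric])
qed simp

lemma diff_y_pow_binom2: "(diff_y ^^ b) (binom2 i j) = (if b \<le> j then binom2 i (j - b) else 0)"
proof (induction b)
  case (Suc b)
  then show ?case
    by (cases "b < j") (auto simp: diff_y_binom2 Suc_diff_Suc[symmetric] not_less_eq_eq
        zero_fun_def[symmetric])
qed simp

lemma diff_diag_pow_binom2:
  "i + j < m \<Longrightarrow> (diff_diag ^^ m) (binom2 i j) x y = (0::'a::ring_1)"
proof (induction m arbitrary: i j)
  case (Suc m)
  have "(diff_diag ^^ m) (diff_diag (binom2 i j)) x y = (0::'a)"
    using Suc by (cases i; cases j) (simp_all add: diff_diag_binom2 diff_diag_pow_add)
  then show ?case by (simp add: funpow_Suc_right del: funpow.simps)
qed simp

lemma diff_pow_binom2: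
  "i + j < a + b + m
    \<Longrightarrow> (diff_diag ^^ m) ((diff_y ^^ b) ((diff_x ^^ a) (binom2 i j))) x y = (0::'a::ring_1)"
  by (simp add: diff_x_pow_binom2 diff_y_pow_binom2 diff_diag_pow_binom2)

lemma diff_pow_vanish_if_coordinates_binom2:
  fixes f :: "nat \<Rightarrow> nat \<Rightarrow> 'b \<Rightarrow> 'a::ring_1"
  assumes "\<And>\<beta>. (\<lambda>x y. f x y \<beta>) = (if \<beta> \<in> B then binom2 (I \<beta>) (J \<beta>) else 0)"
    and "\<And>\<beta>. \<beta> \<in> B \<Longrightarrow> I \<beta> + J \<beta> < a + b + m"
  shows "(diff_diag ^^ m) ((diff_y ^^ b) ((diff_x ^^ a) f)) = 0"
proof (intro ext)
  fix x y \<beta>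
  show "(diff_diag ^^ m) ((diff_y ^^ b) ((diff_x ^^ a) f)) x y \<beta> = 0 x y \<beta>"
    using assms[of \<beta>] by (simp add: diff_pow_apply diff_pow_binom2 zero_fun_def[symmetric])
qed

lemma barv_diff_pow_vanish:
  assumes "n < a + b + m"
  shows "(diff_diag ^^ m) ((diff_y ^^ b) ((diff_x ^^ a) (\<lambda>x y. barv n (x, y)))) = 0"
    and "(diff_diag ^^ m) ((diff_y ^^ b) ((diff_x ^^ a) (\<lambda>x y. barv n (y, x)))) = 0"
proof -
  have "fst \<beta> + snd \<beta> < a + b + m" if "\<beta> \<in> Lambda2 n" for \<beta>
    using that assms by (auto simp: Lambda2_def)
  then show "(diff_diag ^^ m) ((diff_y ^^ b) ((diff_x ^^ a) (\<lambda>x y. barv n (x, y)))) = 0"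
    and "(diff_diag ^^ m) ((diff_y ^^ b) ((diff_x ^^ a) (\<lambda>x y. barv n (y, x)))) = 0"
    by (intro diff_pow_vanish_if_coordinates_binom2[where B = "Lambda2 n" and I = fst and J = snd]
          diff_pow_vanish_if_coordinates_binom2[where B = "Lambda2 n" and I = snd and J = fst];
        force simp: barv_def binom2_def fun_eq_iff)+
qed

section \<open>The staircase of an element of Omega\<close>

lemma Omega_D:
  assumes "(z, ds) \<in> Omega n"
  shows "ds ! 0 = 0" and "\<And>i. 1 \<le> i \<Longrightarrow> i < length ds \<Longrightarrow> 1 \<le> ds ! i"
    and "psum ds (length ds - 1) = n"
proof -
  have "ds \<noteq> []" using assms by (simp add: Omega_def)
  then have "{0..length ds - 1} = {0..<length ds}" by (cases ds) auto
  then show "psum ds (length ds - 1) = n"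
    using assms by (simp add: Omega_def psum_def sum_list_sum_nth)
qed (use assms in \<open>auto simp: Omega_def\<close>)

lemma psum_mono: "s \<le> t \<Longrightarrow> psum ds s \<le> psum ds t"
  unfolding psum_def by (rule sum_mono2) auto

lemma psum_Suc: "psum ds (Suc t) = psum ds t + ds ! Suc t"
  by (simp add: psum_def)

definition block :: "nat list \<Rightarrow> nat \<Rightarrow> nat" where
  "block ds j = (THE t. 1 \<le> t \<and> t \<le> length ds - 1 \<and> psum ds (t - 1) < j \<and> j \<le> psum ds t)"

lemma block_eqI:
  assumes "1 \<le> t" "t \<le> length ds - 1" "psum ds (t - 1) < j" "j \<le> psum ds t"
  shows "block ds j = t"
  unfolding block_def
proof (rule the_equality)
  fix s assume s: "1 \<le> s \<and> s \<le> length ds - 1 \<and> psum ds (s - 1) < j \<and> j \<le> psum ds s"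
  show "s = t"
  proof (rule linorder_cases)
    assume "s < t"
    then have "psum ds s \<le> psum ds (t - 1)" by (intro psum_mono) simp
    then show ?thesis using s assms by linarith
  next
    assume "t < s"
    then have "psum ds t \<le> psum ds (s - 1)" by (intro psum_mono) simp
    then show ?thesis using s assms by linarith
  qed
qed (use assms in simp)

lemma block_exists:
  assumes "(z, ds) \<in> Omega n" "1 \<le> j" "j \<le> n"
  obtains t where "1 \<le> t" "t \<le> length ds - 1" "psum ds (t - 1) < j" "j \<le> psum ds t"
proof -
  define t where "t = (LEAST t. j \<le> psum ds t)"
  have last: "j \<le> psum ds (length ds - 1)" using Omega_D(3)[OF assms(1)] assms by simp
  have "j \<le> psum ds t" unfolding t_def using last by (rule LeastI)
  moreover have "t \<le> length ds - 1" unfolding t_def using last by (rule Least_le)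
  moreover have "t \<noteq> 0"
  proof
    assume "t = 0"
    then show False
      using \<open>j \<le> psum ds t\<close> Omega_D(1)[OF assms(1)] assms(2) by (simp add: psum_def)
  qed
  moreover have "\<not> j \<le> psum ds (t - 1)"
    unfolding t_def by (rule not_less_Least) (use \<open>t \<noteq> 0\<close> in \<open>simp add: t_def\<close>)
  ultimately show ?thesis using that[of t] by simp
qed

definition parity_psum :: "bool \<Rightarrow> nat list \<Rightarrow> nat \<Rightarrow> nat" where
  "parity_psum p ds t = (\<Sum>i | i < t \<and> odd i = p. ds ! i)"

lemma parity_psum_Suc:
  "parity_psum p ds (Suc t) = parity_psum p ds t + (if odd t = p then ds ! t else 0)"
proof -
  have "{i. i < Suc t \<and> odd i = p} = (if odd t = p then insert t else id) {i. i < t \<and> odd i = p}"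
    by (auto simp: less_Suc_eq)
  then show ?thesis by (simp add: parity_psum_def)
qed

definition parity_steps :: "bool \<Rightarrow> nat list \<Rightarrow> nat \<Rightarrow> nat" where
  "parity_steps p ds j = (if j = 0 then 0 else parity_psum p ds (block ds j)
      + (if odd (block ds j) = p then j - psum ds (block ds j - 1) else 0))"

lemma parity_steps_Suc:
  assumes \<Omega>: "(z, ds) \<in> Omega n" and "j < n"
  shows "parity_steps p ds (Suc j) = parity_steps p ds j + (if odd (block ds (Suc j)) = p then 1 else 0)"
proof -
  obtain t where t: "1 \<le> t" "t \<le> length ds - 1" "psum ds (t - 1) < Suc j" "Suc j \<le> psum ds t"
    using block_exists[OF \<Omega>, of "Suc j"] \<open>j < n\<close> by auto
  have block_Suc: "block ds (Suc j) = t" using block_eqI[OF t] .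
  consider "psum ds (t - 1) < j" | "t = 1" "j = psum ds (t - 1)" | s where "t = Suc s" "1 \<le> s" "j = psum ds s"
    using t by (cases t) fastforce+
  then show ?thesis
  proof cases
    case 1
    then have "block ds j = t" using t by (intro block_eqI) auto
    then show ?thesis using 1 block_Suc by (auto simp: parity_steps_def Suc_diff_le)
  next
    case 2
    then show ?thesis
      using block_Suc Omega_D(1)[OF \<Omega>] by (simp add: parity_steps_def parity_psum_def psum_def)
  next
    case 3
    have "1 \<le> ds ! s" using Omega_D(2)[OF \<Omega>] 3 t by simp
    then have "psum ds (s - 1) < j" using 3 psum_Suc[of ds "s - 1"] by simp
    then have "block ds j = s" using 3 t by (intro block_eqI) auto
    moreover have "j - psum ds (s - 1) = ds ! s" using 3 psum_Suc[of ds "s - 1"] by simp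
    moreover have "j \<noteq> 0" using \<open>psum ds (s - 1) < j\<close> by simp
    ultimately show ?thesis
      using 3 block_Suc by (simp add: parity_steps_def parity_psum_Suc)
  qed
qed

(* block ds j is the index t in the definition of v_{j,eta}.  The point v_{j,eta} lies on the
  x-axis iff horizontal eta j; xsteps eta j and ysteps eta j count the points v_{i,eta},
  1 <= i <= j, on the x-axis and on the y-axis, and are the nonzero coordinates in vvec. *)
definition horizontal :: "nat \<times> nat list \<Rightarrow> nat \<Rightarrow> bool" where
  "horizontal \<eta> j \<longleftrightarrow> (fst \<eta> = 1 \<longleftrightarrow> odd (block (snd \<eta>) j))"

definition xsteps :: "nat \<times> nat list \<Rightarrow> nat \<Rightarrow> nat" where
  "xsteps \<eta> = parity_steps (fst \<eta> = 1) (snd \<eta>)"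

definition ysteps :: "nat \<times> nat list \<Rightarrow> nat \<Rightarrow> nat" where
  "ysteps \<eta> = parity_steps (fst \<eta> \<noteq> 1) (snd \<eta>)"

lemma vvec_eq: "j \<noteq> 0 \<Longrightarrow> vvec j \<eta> = (if horizontal \<eta> j then (xsteps \<eta> j, 0) else (0, ysteps \<eta> j))"
  by (auto simp: vvec_def Let_def horizontal_def xsteps_def ysteps_def parity_steps_def
      parity_psum_def block_def)

lemma steps_0 [simp]: "xsteps \<eta> 0 = 0" "ysteps \<eta> 0 = 0"
  by (simp_all add: xsteps_def ysteps_def parity_steps_def)

lemma steps_Suc:
  assumes "\<eta> \<in> Omega n" "j < n"
  shows "xsteps \<eta> (Suc j) = xsteps \<eta> j + (if horizontal \<eta> (Suc j) then 1 else 0)"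
    and "ysteps \<eta> (Suc j) = ysteps \<eta> j + (if horizontal \<eta> (Suc j) then 0 else 1)"
  using parity_steps_Suc[of "fst \<eta>" "snd \<eta>" n j] assms
  by (auto simp: xsteps_def ysteps_def horizontal_def)

lemma xsteps_add_ysteps: "\<eta> \<in> Omega n \<Longrightarrow> j \<le> n \<Longrightarrow> xsteps \<eta> j + ysteps \<eta> j = j"
  by (induction j) (simp_all add: steps_Suc)

lemma steps_mono:
  assumes "\<eta> \<in> Omega n" "i \<le> j" "j \<le> n"
  shows "xsteps \<eta> i \<le> xsteps \<eta> j \<and> ysteps \<eta> i \<le> ysteps \<eta> j"
  using assms(2,3)
proof (induction j)
  case (Suc j)
  then show ?case using steps_Suc[OF assms(1)] by (cases "i = Suc j") fastforce+
qed simp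

definition strip :: "nat \<times> nat list \<Rightarrow> nat \<Rightarrow> (nat \<times> nat) set" where
  "strip \<eta> j = {(x, y). y \<le> x + ysteps \<eta> j \<and> x \<le> y + xsteps \<eta> j}"

lemma shift_mem_strip_iff: "shift p v \<in> strip \<eta> l \<longleftrightarrow> v \<in> strip \<eta> l"
  by (auto simp: shift_def strip_def)

lemma vvec_mem_strip:
  assumes "\<eta> \<in> Omega n" "1 \<le> i" "i \<le> l" "l \<le> n"
  shows "vvec i \<eta> \<in> strip \<eta> l"
  using vvec_eq[of i \<eta>] steps_mono[OF assms(1), of i l] assms by (auto simp: strip_def)

lemma Tset_subset_strip:
  assumes "\<eta> \<in> Omega n" "i \<le> l" "l \<le> n"
  shows "Tset n \<eta> i \<subseteq> strip \<eta> l"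
proof (cases "i = 0")
  case False
  then show ?thesis
    using vvec_mem_strip[OF assms(1) _ assms(2,3)] shift_mem_strip_iff[of _ "vvec i \<eta>" \<eta> l]
    by (auto simp: Tset_def shift_def)
qed (auto simp: Tset_def strip_def)

section \<open>Spans on the strip\<close>

lemma barv_zero: "barv n (0, 0) = 0"
  by (auto simp: barv_def Lambda2_def fun_eq_iff)

lemma barv_diagonal_mem:
  fixes W :: "(nat \<times> nat \<Rightarrow> complex) set"
  assumes W: "additive_subgroup W" and diagonal: "\<And>p. 1 \<le> p \<Longrightarrow> p \<le> n \<Longrightarrow> barv n (p, p) \<in> W"
  shows "barv n (t, t) \<in> W"
proof (rule additive_subgroup.mem_if_fdiff_pow_mem[OF W, where m = "Suc n" and R = 0])
  have "(diff_diag ^^ Suc n) (\<lambda>x y. barv n (x, y)) = 0"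
    using barv_diff_pow_vanish(1)[of n 0 0 "Suc n"] by simp
  then show "(fdiff ^^ Suc n) (\<lambda>t. barv n (t, t)) t \<in> W" for t
    using fdiff_pow_diagonal[of "Suc n" "\<lambda>x y. barv n (x, y)" t] additive_subgroup.zero_mem[OF W]
    by (simp only: zero_fun_apply)
  show "barv n (t, t) \<in> W" if "0 \<le> t" "t < 0 + Suc n" for t
    using that diagonal[of t] barv_zero[of n] additive_subgroup.zero_mem[OF W] by (cases t) auto
qed

lemma barv_strip_Suc_mem:
  fixes W :: "(nat \<times> nat \<Rightarrow> complex) set"
  assumes W: "additive_subgroup W" and \<Omega>: "\<eta> \<in> Omega n" and "j < n"
    and strip: "\<And>v. v \<in> strip \<eta> j \<Longrightarrow> barv n v \<in> W"
    and window: "\<And>p. p \<le> n - Suc j \<Longrightarrow> barv n (shift (R + p) (vvec (Suc j) \<eta>)) \<in> W"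
  shows "v \<in> strip \<eta> (Suc j) \<Longrightarrow> barv n v \<in> W"
proof -
  let ?a = "xsteps \<eta> j" and ?b = "ysteps \<eta> j"
  have vanish: "n < Suc ?a + ?b + (n - j)" "n < Suc ?b + ?a + (n - j)"
    using xsteps_add_ysteps[OF \<Omega>, of j] \<open>j < n\<close> by simp_all
  have window': "barv n (shift t (vvec (Suc j) \<eta>)) \<in> W" if "R \<le> t" "t < R + (n - j)" for t
    using window[of "t - R"] that by simp
  have "barv n (x, y) \<in> W" if "y \<le> x + ysteps \<eta> (Suc j)" "x \<le> y + xsteps \<eta> (Suc j)" for x y
  proof (cases "horizontal \<eta> (Suc j)")
    case True
    then have steps: "xsteps \<eta> (Suc j) = Suc ?a" "ysteps \<eta> (Suc j) = ?b"
      using steps_Suc[OF \<Omega> \<open>j < n\<close>] by simp_all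
    then have "vvec (Suc j) \<eta> = (Suc ?a, 0)" using vvec_eq[of "Suc j" \<eta>] True by simp
    then have corner: "barv n (Suc ?a + t, t) \<in> W" if "R \<le> t" "t < R + (n - j)" for t
      using window'[OF that] by (simp add: shift_def)
    show ?thesis
      using additive_subgroup.strip_extend[OF W barv_diff_pow_vanish(1)[OF vanish(1)] _ corner]
        strip that by (simp add: steps strip_def)
  next
    case False
    then have steps: "xsteps \<eta> (Suc j) = ?a" "ysteps \<eta> (Suc j) = Suc ?b"
      using steps_Suc[OF \<Omega> \<open>j < n\<close>] by simp_all
    then have "vvec (Suc j) \<eta> = (0, Suc ?b)" using vvec_eq[of "Suc j" \<eta>] False by simp
    then have corner: "barv n (t, Suc ?b + t) \<in> W" if "R \<le> t" "t < R + (n - j)" for t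
      using window'[OF that] by (simp add: shift_def)
    show ?thesis
      using additive_subgroup.strip_extend[OF W barv_diff_pow_vanish(2)[OF vanish(2)] _ corner]
        strip that by (simp add: steps strip_def)
  qed
  then show "v \<in> strip \<eta> (Suc j) \<Longrightarrow> barv n v \<in> W"
    by (auto simp: strip_def)
qed

lemma barv_mem_if_mem_strip:
  fixes W :: "(nat \<times> nat \<Rightarrow> complex) set"
  assumes W: "additive_subgroup W" and \<Omega>: "\<eta> \<in> Omega n" and "l \<le> n"
    and diagonal: "\<And>p. 1 \<le> p \<Longrightarrow> p \<le> n \<Longrightarrow> barv n (p, p) \<in> W"
    and windows: "\<And>i. 1 \<le> i \<Longrightarrow> i \<le> l \<Longrightarrow> \<exists>R. \<forall>p \<le> n - i. barv n (shift (R + p) (vvec i \<eta>)) \<in> W"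
  shows "v \<in> strip \<eta> l \<Longrightarrow> barv n v \<in> W"
proof -
  have "\<forall>v \<in> strip \<eta> j. barv n v \<in> W" if "j \<le> l" for j
    using that
  proof (induction j)
    case 0
    then show ?case using barv_diagonal_mem[OF W diagonal] by (auto simp: strip_def)
  next
    case (Suc j)
    obtain R where window: "\<And>p. p \<le> n - Suc j \<Longrightarrow> barv n (shift (R + p) (vvec (Suc j) \<eta>)) \<in> W"
      using windows[of "Suc j"] Suc.prems by auto
    have "j < n" using Suc.prems \<open>l \<le> n\<close> by simp
    have "\<forall>v \<in> strip \<eta> j. barv n v \<in> W" using Suc by simp
    then show ?case using barv_strip_Suc_mem[OF W \<Omega> \<open>j < n\<close> _ window] by blast
  qed
  then show "v \<in> strip \<eta> l \<Longrightarrow> barv n v \<in> W" by blast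
qed

lemma module_pointwise_scale: "module (\<lambda>(c::'b::comm_ring_1) (f::'a \<Rightarrow> 'b) x. c * f x)"
  by unfold_locales (auto simp: fun_eq_iff algebra_simps)

lemma additive_subgroup_cspan: "additive_subgroup (cspan X)"
  by unfold_locales
    (simp_all add: cspan_def module.span_zero[OF module_pointwise_scale]
      module.span_diff[OF module_pointwise_scale])

lemma shift_shift: "shift a (shift b v) = shift (a + b) v"
  by (simp add: shift_def)

lemma shift_mem_Tset: "i \<noteq> 0 \<Longrightarrow> p \<le> n - i \<Longrightarrow> shift p (vvec i \<eta>) \<in> Tset n \<eta> i"
  by (auto simp: Tset_def shift_def)

lemma shift_mem_shift_Tset:
  "i \<noteq> 0 \<Longrightarrow> p \<le> n - i \<Longrightarrow> shift (R + p) (vvec i \<eta>) \<in> shift R ` Tset n \<eta> i"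
  using shift_mem_Tset[of i p n \<eta>] by (auto simp: shift_shift[symmetric])

lemma cspan_barv_eq_strip:
  assumes \<Omega>: "\<eta> \<in> Omega n" and "l \<le> n"
    and "X \<subseteq> strip \<eta> l" and "Tset n \<eta> 0 \<subseteq> X"
    and windows: "\<And>i. 1 \<le> i \<Longrightarrow> i \<le> l \<Longrightarrow> \<exists>R. \<forall>p \<le> n - i. shift (R + p) (vvec i \<eta>) \<in> X"
  shows "cspan (barv n ` X) = cspan (barv n ` strip \<eta> l)"
  unfolding cspan_def module.span_eq[OF module_pointwise_scale]
proof
  show "barv n ` X \<subseteq> module.span (\<lambda>c f x. c * f x) (barv n ` strip \<eta> l)"
    using \<open>X \<subseteq> strip \<eta> l\<close> module.span_superset[OF module_pointwise_scale] by blast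
  have "barv n v \<in> cspan (barv n ` X)" if "v \<in> strip \<eta> l" for v
  proof (rule barv_mem_if_mem_strip[OF additive_subgroup_cspan \<Omega> \<open>l \<le> n\<close> _ _ that])
    show "barv n (p, p) \<in> cspan (barv n ` X)" if "1 \<le> p" "p \<le> n" for p
      using that \<open>Tset n \<eta> 0 \<subseteq> X\<close>
      by (auto simp: cspan_def Tset_def intro!: module.span_base[OF module_pointwise_scale])
    show "\<exists>R. \<forall>p \<le> n - i. barv n (shift (R + p) (vvec i \<eta>)) \<in> cspan (barv n ` X)"
      if "1 \<le> i" "i \<le> l" for i
      using windows[OF that]
      by (auto simp: cspan_def intro!: module.span_base[OF module_pointwise_scale])
  qed
  then show "barv n ` strip \<eta> l \<subseteq> module.span (\<lambda>c f x. c * f x) (barv n ` X)"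
    by (auto simp: cspan_def)
qed

theorem proposition2p14:
  fixes n l :: nat and \<eta> :: "nat \<times> nat list" and r :: "nat \<Rightarrow> nat"
  assumes "1 \<le> n" and "\<eta> \<in> Omega n" and "1 \<le> l" and "l \<le> n"
  shows "cspan (barv n ` (Tset n \<eta> 0 \<union> (\<Union>i\<in>{1..l}. shift (r i) ` Tset n \<eta> i)))
           = cspan (barv n ` (\<Union>i\<in>{0..l}. Tset n \<eta> i))
       \<and> (\<forall>s::nat. barv n (shift s (vvec l \<eta>)) \<in> cspan (barv n ` (\<Union>i\<in>{0..l}. Tset n \<eta> i)))"
proof -
  let ?S1 = "Tset n \<eta> 0 \<union> (\<Union>i\<in>{1..l}. shift (r i) ` Tset n \<eta> i)"
  let ?S2 = "\<Union>i\<in>{0..l}. Tset n \<eta> i"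
  have T: "\<And>i. i \<le> l \<Longrightarrow> Tset n \<eta> i \<subseteq> strip \<eta> l"
    using Tset_subset_strip[OF \<open>\<eta> \<in> Omega n\<close> _ \<open>l \<le> n\<close>] .
  have S1: "cspan (barv n ` ?S1) = cspan (barv n ` strip \<eta> l)"
  proof (rule cspan_barv_eq_strip[OF \<open>\<eta> \<in> Omega n\<close> \<open>l \<le> n\<close>])
    show "?S1 \<subseteq> strip \<eta> l"
      using T shift_mem_strip_iff by (fastforce simp: UN_subset_iff)
    show "\<exists>R. \<forall>p \<le> n - i. shift (R + p) (vvec i \<eta>) \<in> ?S1" if "1 \<le> i" "i \<le> l" for i
      using that shift_mem_shift_Tset[of i _ n "r i" \<eta>]
      by (intro exI[of _ "r i"]) (auto intro!: bexI[of _ i])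
  qed blast
  have S2: "cspan (barv n ` ?S2) = cspan (barv n ` strip \<eta> l)"
  proof (rule cspan_barv_eq_strip[OF \<open>\<eta> \<in> Omega n\<close> \<open>l \<le> n\<close>])
    show "\<exists>R. \<forall>p \<le> n - i. shift (R + p) (vvec i \<eta>) \<in> ?S2" if "1 \<le> i" "i \<le> l" for i
      using that shift_mem_Tset[of i _ n \<eta>] by (intro exI[of _ 0]) (auto intro!: bexI[of _ i])
    show "?S2 \<subseteq> strip \<eta> l" using T by (simp add: UN_subset_iff)
    show "Tset n \<eta> 0 \<subseteq> ?S2" by (rule UN_upper) simp
  qed
  have "shift s (vvec l \<eta>) \<in> strip \<eta> l" for s
    using vvec_mem_strip[OF \<open>\<eta> \<in> Omega n\<close> \<open>1 \<le> l\<close> order_refl \<open>l \<le> n\<close>]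
    by (simp add: shift_mem_strip_iff)
  then have "barv n (shift s (vvec l \<eta>)) \<in> cspan (barv n ` strip \<eta> l)" for s
    unfolding cspan_def by (intro module.span_base[OF module_pointwise_scale] imageI)
  then show ?thesis using S1 S2 by simp
qed

end
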